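(* Let $S_1(x),\dots,S_n(x) \in \mathbb{C}\{\!\{x\}\!\}$ be Puiseux series with nonnegative valuations. Then \[ \operatorname{val}\bigl(S_1(x)+\dots+S_n(x)\bigr) \le \frac{n(n-1)}{2} + \operatorname{val}\Bigl(W\bigl(S_1(x),\dots,S_n(x)\bigr)\Bigr). \]
   Context: A Puiseux series is a formal series $S(x)=\sum_{i\ge 1} c_i x^{\lambda_i}$ (finite or infinite) with nonzero complex coefficients $c_i$ and a strictly increasing sequence of rational exponents $\lambda_i$ having a common denominator, or the empty series $0$; they form a field $\mathbb{C}\{\!\{x\}\!\}$ under the usual operations. The valuation is $\operatorname{val}(S)=\lambda_1$ and $\operatorname{val}(0)=+\infty$. The formal derivative is $\frac{\partial S}{\partial x}(x)=\sum_i \lambda_i c_i x^{\lambda_i-1}$, and $\frac{\partial^k S}{\partial x^k}$ denotes the $k$-th iterated derivative ($0$-th derivative is $S$). The Wronskian $W(S_1,\dots,S_n)$ is the determinant of the $n\times n$ matrix whose $(i,j)$ entry is $\frac{\partial^{i-1} S_j}{\partial x^{i-1}}(x)$, for $1\le i,j\le n$. *)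

theory Defs
  imports Complex_Main "HOL-Library.Extended_Real" "HOL-Combinatorics.Permutations"
begin

text \<open>A Puiseux series is represented by its coefficient function
  c :: rat => complex (coefficient of x^q).\<close>

type_synonym puiseux = "rat \<Rightarrow> complex"

definition is_puiseux :: "puiseux \<Rightarrow> bool" where
  "is_puiseux c \<longleftrightarrow>
     (\<exists>d::nat. d > 0 \<and> (\<exists>N::int. \<forall>q. c q \<noteq> 0 \<longrightarrow>
        (\<exists>k::int. k \<ge> N \<and> q = of_int k / of_nat d)))"

definition pz_val :: "puiseux \<Rightarrow> ereal" where
  "pz_val c = (if \<forall>q. c q = 0 then \<infinity>
               else ereal (real_of_rat (LEAST q. c q \<noteq> 0)))"

definition pz_add :: "puiseux \<Rightarrow> puiseux \<Rightarrow> puiseux" where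
  "pz_add a b = (\<lambda>q. a q + b q)"

definition pz_one :: puiseux where
  "pz_one = (\<lambda>q. if q = 0 then 1 else 0)"

text \<open>Cauchy product (the index set is finite for Puiseux series).\<close>
definition pz_mult :: "puiseux \<Rightarrow> puiseux \<Rightarrow> puiseux" where
  "pz_mult a b = (\<lambda>q. \<Sum>r \<in> {r. a r \<noteq> 0 \<and> b (q - r) \<noteq> 0}. a r * b (q - r))"

definition pz_prod_list :: "puiseux list \<Rightarrow> puiseux" where
  "pz_prod_list xs = foldr pz_mult xs pz_one"

definition pz_deriv :: "puiseux \<Rightarrow> puiseux" where
  "pz_deriv c = (\<lambda>q. of_rat (q + 1) * c (q + 1))"

definition wronskian :: "nat \<Rightarrow> (nat \<Rightarrow> puiseux) \<Rightarrow> puiseux" where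
  "wronskian n S = (\<lambda>q. \<Sum>p \<in> {p. p permutes {..<n}}.
      of_int (sign p) * pz_prod_list (map (\<lambda>i. (pz_deriv ^^ i) (S (p i))) [0..<n]) q)"

end

theory Submission
  imports Defs "HOL-Computational_Algebra.Formal_Laurent_Series" "Jordan_Normal_Form.Determinant"
begin

text \<open>Choose a common denominator \<open>D\<close> of the exponents and substitute \<open>x = t\<^sup>D\<close>: the
  series become Laurent series in \<open>t\<close> without negative powers, and \<open>d/dx\<close> lowers the
  \<open>t\<close>-order by at most \<open>D\<close>. Adding all columns of the Wronskian matrix to the last one
  does not change the determinant and turns the last column into the derivatives of
  \<open>F = S\<^sub>1 + \<dots> + S\<^sub>n\<close>. In the Leibniz expansion, row \<open>i\<close> then contributes order
  at least \<open>-iD\<close>, and the entry taken from the last column additionally \<open>ord F\<close>; hence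
  \<open>ord W \<ge> ord F - D(0 + 1 + \<dots> + (n - 1))\<close>, which is the claim after dividing by \<open>D\<close>.\<close>

definition fls_vanishes_below :: "int \<Rightarrow> 'a::zero fls \<Rightarrow> bool" where
  "fls_vanishes_below a f \<longleftrightarrow> (\<forall>k<a. fls_nth f k = 0)"

lemma fls_vanishes_below_zero [simp]: "fls_vanishes_below a 0"
  by (simp add: fls_vanishes_below_def)

lemma fls_vanishes_below_subdegree: "fls_vanishes_below (fls_subdegree f) f"
  by (simp add: fls_vanishes_below_def)

lemma fls_vanishes_below_le_subdegree:
  "fls_vanishes_below a f \<Longrightarrow> f \<noteq> 0 \<Longrightarrow> a \<le> fls_subdegree f"
  using nth_fls_subdegree_nonzero unfolding fls_vanishes_below_def by (meson not_less)

lemma fls_vanishes_below_add: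
  "fls_vanishes_below a f \<Longrightarrow> fls_vanishes_below a g \<Longrightarrow> fls_vanishes_below a (f + g)"
  by (simp add: fls_vanishes_below_def)

lemma fls_vanishes_below_sum:
  "(\<And>i. i \<in> A \<Longrightarrow> fls_vanishes_below a (g i)) \<Longrightarrow> fls_vanishes_below a (\<Sum>i\<in>A. g i)"
  by (induction A rule: infinite_finite_induct) (auto intro: fls_vanishes_below_add)

lemma fls_vanishes_below_mult:
  fixes f g :: "'a::semiring_0 fls"
  assumes "fls_vanishes_below a f" and "fls_vanishes_below b g"
  shows "fls_vanishes_below (a + b) (f * g)"
proof (cases "f = 0 \<or> g = 0")
  case False
  then have "a \<le> fls_subdegree f" "b \<le> fls_subdegree g"
    using assms fls_vanishes_below_le_subdegree by auto
  then show ?thesis unfolding fls_vanishes_below_def by (auto intro: fls_times_nth_eq0)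
qed auto

lemma fls_vanishes_below_of_int: "fls_vanishes_below 0 (of_int c :: 'a::ring_1 fls)"
  by (simp add: fls_vanishes_below_def fls_of_int_nth)

lemma fls_vanishes_below_prod:
  fixes g :: "'b \<Rightarrow> 'a::comm_semiring_1 fls"
  shows "(\<And>i. i \<in> A \<Longrightarrow> fls_vanishes_below (b i) (g i)) \<Longrightarrow>
    fls_vanishes_below (\<Sum>i\<in>A. b i) (\<Prod>i\<in>A. g i)"
proof (induction A rule: infinite_finite_induct)
  case (insert x F)
  then show ?case by (simp add: fls_vanishes_below_mult)
qed (auto simp: fls_vanishes_below_def)

lemma det_fls_vanishes_below:
  fixes A :: "'a::comm_ring_1 fls mat"
  assumes A: "A \<in> carrier_mat n n"
    and entries: "\<And>i j. i < n \<Longrightarrow> j < n \<Longrightarrow> fls_vanishes_below (r i + c j) (A $$ (i, j))"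
  shows "fls_vanishes_below ((\<Sum>i<n. r i) + (\<Sum>j<n. c j)) (det A)"
proof -
  have "fls_vanishes_below ((\<Sum>i<n. r i) + (\<Sum>j<n. c j)) (signof p * (\<Prod>i=0..<n. A $$ (i, p i)))"
    if p: "p permutes {0..<n}" for p
  proof -
    have "fls_vanishes_below (0 + (\<Sum>i=0..<n. r i + c (p i))) (signof p * (\<Prod>i=0..<n. A $$ (i, p i)))"
      using permutes_in_image[OF p]
      by (intro fls_vanishes_below_mult fls_vanishes_below_of_int fls_vanishes_below_prod entries) auto
    moreover have "(\<Sum>i=0..<n. r i + c (p i)) = (\<Sum>i<n. r i) + (\<Sum>j<n. c j)"
      using sum.permute[OF p, of c] by (simp add: sum.distrib atLeast0LessThan comp_def)
    ultimately show ?thesis by simp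
  qed
  then show ?thesis
    unfolding det_def'[OF A] by (intro fls_vanishes_below_sum) auto
qed

lemma det_last_col_row_sums:
  fixes A :: "'a::comm_ring_1 mat"
  assumes A: "A \<in> carrier_mat n n"
  shows "det (mat n n (\<lambda>(i, j). if j = n - 1 then \<Sum>l<n. A $$ (i, l) else A $$ (i, j))) = det A"
proof -
  define E :: "'a mat" where "E = mat n n (\<lambda>(i, j). if i = j \<or> j = n - 1 then 1 else 0)"
  define B where "B = mat n n (\<lambda>(i, j). if j = n - 1 then \<Sum>l<n. A $$ (i, l) else A $$ (i, j))"
  have E: "E \<in> carrier_mat n n" by (simp add: E_def)
  have "det E = prod_list (diag_mat E)"
    by (rule det_upper_triangular[OF _ E]) (auto simp: E_def upper_triangular_def)
  also have "diag_mat E = replicate n 1"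
    by (rule nth_equalityI) (auto simp: diag_mat_def E_def)
  finally have "det (A * E) = det A" using det_mult[OF A E] by (simp add: prod_list_replicate)
  moreover have "A * E = B"
  proof (rule eq_matI)
    fix i j assume "i < dim_row B" "j < dim_col B"
    then have ij: "i < n" "j < n" by (simp_all add: B_def)
    have "(A * E) $$ (i, j) = (\<Sum>l<n. A $$ (i, l) * (if l = j \<or> j = n - 1 then 1 else 0))"
      using A E ij by (simp add: scalar_prod_def E_def atLeast0LessThan)
    also have "\<dots> = B $$ (i, j)"
      using ij by (auto simp: B_def if_distrib cong: if_cong)
    finally show "(A * E) $$ (i, j) = B $$ (i, j)" .
  qed (use A E in \<open>auto simp: B_def\<close>)
  ultimately show ?thesis by (simp add: B_def)
qed

text \<open>\<open>pz_of_fls D f\<close> is the Puiseux series \<open>f(x\<^bsup>1/D\<^esup>)\<close>.\<close>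

definition pz_of_fls :: "nat \<Rightarrow> complex fls \<Rightarrow> puiseux" where
  "pz_of_fls D f q =
     (if of_int \<lfloor>q * of_nat D\<rfloor> = q * of_nat D then fls_nth f \<lfloor>q * of_nat D\<rfloor> else 0)"

lemma pz_of_fls_at: "D > 0 \<Longrightarrow> pz_of_fls D f (of_int k / of_nat D) = fls_nth f k"
  by (simp add: pz_of_fls_def)

lemma pz_of_fls_off: "D > 0 \<Longrightarrow> (\<And>k. q \<noteq> of_int k / of_nat D) \<Longrightarrow> pz_of_fls D f q = 0"
  unfolding pz_of_fls_def by (auto simp: eq_divide_eq split: if_splits)

lemma pz_of_fls_nonzeroE:
  assumes "D > 0" and "pz_of_fls D f q \<noteq> 0"
  obtains k where "q = of_int k / of_nat D" and "fls_nth f k \<noteq> 0"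
  by (metis assms pz_of_fls_at pz_of_fls_off)

lemma pz_of_fls_add: "pz_of_fls D (f + g) q = pz_of_fls D f q + pz_of_fls D g q"
  by (simp add: pz_of_fls_def)

lemma pz_of_fls_sum:
  "pz_of_fls D (\<Sum>i\<in>A. g i) = (\<lambda>q. \<Sum>i\<in>A. pz_of_fls D (g i) q)"
proof (induction A rule: infinite_finite_induct)
  case (insert x F)
  then show ?case by (simp add: pz_of_fls_add fun_eq_iff)
qed (simp_all add: pz_of_fls_def fun_eq_iff)

lemma pz_of_fls_of_int_mult: "pz_of_fls D (of_int c * g) q = of_int c * pz_of_fls D g q"
  by (simp add: pz_of_fls_def fls_of_int)

lemma pz_of_fls_one: "D > 0 \<Longrightarrow> pz_of_fls D 1 = pz_one"
proof
  fix q :: rat assume D: "D > 0"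
  show "pz_of_fls D 1 q = pz_one q"
  proof (cases "\<exists>k. q = of_int k / of_nat D")
    case True
    then obtain k where q: "q = of_int k / of_nat D" by blast
    then have "q = 0 \<longleftrightarrow> k = 0" using D by auto
    then show ?thesis using q D by (simp add: pz_of_fls_at pz_one_def)
  next
    case False
    then have "q \<noteq> 0" by (metis div_0 of_int_0)
    then show ?thesis using pz_of_fls_off[OF D] False by (simp add: pz_one_def)
  qed
qed

lemma pz_mult_pz_of_fls_at:
  assumes D: "D > 0"
  shows "pz_mult (pz_of_fls D f) (pz_of_fls D g) (of_int n / of_nat D) = fls_nth (f * g) n"
proof -
  define q where "q = of_int n / (of_nat D :: rat)"
  let ?R = "{r. pz_of_fls D f r \<noteq> 0 \<and> pz_of_fls D g (q - r) \<noteq> 0}"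
  let ?h = "\<lambda>i::int. of_int i / (of_nat D :: rat)"
  let ?I = "{i. fls_nth f i \<noteq> 0 \<and> fls_nth g (n - i) \<noteq> 0}"
  have hq: "q - ?h i = ?h (n - i)" for i by (simp add: q_def diff_divide_distrib)
  have R: "?R = ?h ` ?I"
  proof
    show "?R \<subseteq> ?h ` ?I"
    proof
      fix r assume r: "r \<in> ?R"
      then obtain i where i: "r = ?h i" "fls_nth f i \<noteq> 0" by (auto elim: pz_of_fls_nonzeroE[OF D])
      then have "fls_nth g (n - i) \<noteq> 0" using r hq pz_of_fls_at[OF D] by (auto simp del: of_int_diff)
      then show "r \<in> ?h ` ?I" using i by auto
    qed
  next
    show "?h ` ?I \<subseteq> ?R" using hq pz_of_fls_at[OF D] by (auto simp del: of_int_diff)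
  qed
  have inj: "inj ?h" using D by (auto intro!: injI simp: divide_cancel_right)
  have "pz_mult (pz_of_fls D f) (pz_of_fls D g) q
      = (\<Sum>r\<in>?h ` ?I. pz_of_fls D f r * pz_of_fls D g (q - r))"
    unfolding pz_mult_def R ..
  also have "\<dots> = (\<Sum>i\<in>?I. fls_nth f i * fls_nth g (n - i))"
    by (subst sum.reindex)
      (auto intro: inj_on_subset[OF inj] simp del: of_int_diff simp: hq pz_of_fls_at[OF D])
  also have "\<dots> = (\<Sum>i=fls_subdegree f..n - fls_subdegree g. fls_nth f i * fls_nth g (n - i))"
    by (rule sum.mono_neutral_cong_left)
      (use fls_subdegree_leI[of f] fls_subdegree_leI[of g] in force)+
  also have "\<dots> = fls_nth (f * g) n" by (simp add: fls_times_nth(2))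
  finally show ?thesis unfolding q_def .
qed

lemma pz_mult_pz_of_fls_off:
  assumes D: "D > 0" and q: "\<And>k. q \<noteq> of_int k / of_nat D"
  shows "pz_mult (pz_of_fls D f) (pz_of_fls D g) q = 0"
proof -
  have "{r. pz_of_fls D f r \<noteq> 0 \<and> pz_of_fls D g (q - r) \<noteq> 0} = {}"
  proof (rule ccontr)
    assume "{r. pz_of_fls D f r \<noteq> 0 \<and> pz_of_fls D g (q - r) \<noteq> 0} \<noteq> {}"
    then obtain r where "pz_of_fls D f r \<noteq> 0" "pz_of_fls D g (q - r) \<noteq> 0" by auto
    then obtain i j where "r = of_int i / of_nat D" "q - r = of_int j / of_nat D"
      by (metis pz_of_fls_nonzeroE[OF D])
    then have "q = of_int (i + j) / of_nat D" by (simp add: add_divide_distrib)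
    then show False using q by blast
  qed
  then show ?thesis unfolding pz_mult_def by (simp only: sum.empty)
qed

lemma pz_mult_pz_of_fls:
  assumes D: "D > 0"
  shows "pz_mult (pz_of_fls D f) (pz_of_fls D g) = pz_of_fls D (f * g)"
proof
  fix q :: rat
  show "pz_mult (pz_of_fls D f) (pz_of_fls D g) q = pz_of_fls D (f * g) q"
  proof (cases "\<exists>k. q = of_int k / of_nat D")
    case True
    then show ?thesis using pz_mult_pz_of_fls_at[OF D] pz_of_fls_at[OF D] by auto
  next
    case False
    then show ?thesis using pz_mult_pz_of_fls_off[OF D] pz_of_fls_off[OF D] by auto
  qed
qed

lemma pz_prod_list_pz_of_fls:
  "D > 0 \<Longrightarrow> pz_prod_list (map (pz_of_fls D) xs) = pz_of_fls D (prod_list xs)"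
  by (induction xs) (auto simp: pz_prod_list_def pz_of_fls_one pz_mult_pz_of_fls)

lemma pz_val_pz_of_fls:
  assumes D: "D > 0" and f: "f \<noteq> 0"
  shows "pz_val (pz_of_fls D f) = ereal (real_of_int (fls_subdegree f) / real D)"
proof -
  let ?m = "of_int (fls_subdegree f) / (of_nat D :: rat)"
  have nz: "pz_of_fls D f ?m \<noteq> 0" using pz_of_fls_at[OF D] f by simp
  have "(LEAST q. pz_of_fls D f q \<noteq> 0) = ?m"
  proof (rule Least_equality)
    fix y assume "pz_of_fls D f y \<noteq> 0"
    then obtain k where k: "y = of_int k / of_nat D" "fls_nth f k \<noteq> 0"
      by (auto elim: pz_of_fls_nonzeroE[OF D])
    then show "?m \<le> y" using D fls_subdegree_leI[OF k(2)] by (simp add: divide_right_mono)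
  qed (rule nz)
  then show ?thesis using nz unfolding pz_val_def by (auto simp: of_rat_divide)
qed

lemma pz_val_pz_of_fls_0 [simp]: "pz_val (pz_of_fls D 0) = \<infinity>"
  by (simp add: pz_val_def pz_of_fls_def)

lemma pz_val_pz_of_fls_le:
  assumes D: "D > 0"
    and shift: "\<And>a. fls_vanishes_below a F \<Longrightarrow> fls_vanishes_below (a - int D * int s) G"
  shows "pz_val (pz_of_fls D F) \<le> ereal (real s) + pz_val (pz_of_fls D G)"
proof (cases "G = 0")
  case G: False
  have "F \<noteq> 0"
  proof
    assume "F = 0"
    then have "fls_vanishes_below (fls_subdegree G + 1) G"
      using shift[of "fls_subdegree G + 1 + int D * int s"] by simp
    then show False
      using G nth_fls_subdegree_nonzero unfolding fls_vanishes_below_def by (meson less_add_one)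
  qed
  have "fls_subdegree F - int D * int s \<le> fls_subdegree G"
    by (rule fls_vanishes_below_le_subdegree[OF shift[OF fls_vanishes_below_subdegree] G])
  then have "real_of_int (fls_subdegree F) \<le> real_of_int (int D * int s + fls_subdegree G)"
    by (simp only: of_int_le_iff)
  then have "real_of_int (fls_subdegree F) / real D \<le> real s + real_of_int (fls_subdegree G) / real D"
    using D by (simp add: field_simps)
  then show ?thesis by (simp add: pz_val_pz_of_fls D G \<open>F \<noteq> 0\<close>)
qed simp

text \<open>The derivative of \<open>f(x\<^bsup>1/D\<^esup>)\<close>, expressed in the variable \<open>t = x\<^bsup>1/D\<^esup>\<close>:
  \<open>d/dx t\<^sup>k = (k/D) t\<^bsup>k-D\<^esup>\<close>.\<close>

definition fls_ramified_deriv :: "nat \<Rightarrow> complex fls \<Rightarrow> complex fls" where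
  "fls_ramified_deriv D f =
     Abs_fls (\<lambda>k. of_rat ((of_int k + of_nat D) / of_nat D) * fls_nth f (k + int D))"

lemma fls_ramified_deriv_nth:
  "fls_nth (fls_ramified_deriv D f) k = of_rat ((of_int k + of_nat D) / of_nat D) * fls_nth f (k + int D)"
  unfolding fls_ramified_deriv_def
  by (rule nth_Abs_fls_lower_bound[where N = "fls_subdegree f - int D"]) auto

lemma fls_ramified_deriv_add:
  "fls_ramified_deriv D (f + g) = fls_ramified_deriv D f + fls_ramified_deriv D g"
  by (rule fls_eqI) (simp add: fls_ramified_deriv_nth algebra_simps)

lemma fls_ramified_deriv_sum:
  "fls_ramified_deriv D (\<Sum>i\<in>A. g i) = (\<Sum>i\<in>A. fls_ramified_deriv D (g i))"
proof (induction A rule: infinite_finite_induct)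
  case (insert x F)
  then show ?case by (simp add: fls_ramified_deriv_add)
qed (simp_all add: fls_eqI fls_ramified_deriv_nth)

lemma funpow_fls_ramified_deriv_sum:
  "(fls_ramified_deriv D ^^ m) (\<Sum>i\<in>A. g i) = (\<Sum>i\<in>A. (fls_ramified_deriv D ^^ m) (g i))"
  by (induction m) (auto simp: fls_ramified_deriv_sum)

lemma fls_vanishes_below_funpow_ramified_deriv:
  "fls_vanishes_below a f \<Longrightarrow>
    fls_vanishes_below (a - int m * int D) ((fls_ramified_deriv D ^^ m) f)"
  by (induction m) (auto simp: fls_vanishes_below_def fls_ramified_deriv_nth algebra_simps)

lemma pz_deriv_pz_of_fls:
  assumes D: "D > 0"
  shows "pz_deriv (pz_of_fls D f) = pz_of_fls D (fls_ramified_deriv D f)"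
proof
  fix q :: rat
  show "pz_deriv (pz_of_fls D f) q = pz_of_fls D (fls_ramified_deriv D f) q"
  proof (cases "\<exists>k. q = of_int k / of_nat D")
    case True
    then obtain k where q: "q = of_int k / of_nat D" by blast
    then have q1: "q + 1 = of_int (k + int D) / of_nat D" using D by (simp add: field_simps)
    have "pz_deriv (pz_of_fls D f) q = of_rat (q + 1) * fls_nth f (k + int D)"
      unfolding pz_deriv_def q1 pz_of_fls_at[OF D] ..
    then show ?thesis using q1 by (simp add: q pz_of_fls_at[OF D] fls_ramified_deriv_nth)
  next
    case False
    have "q + 1 \<noteq> of_int k / of_nat D" for k
    proof
      assume "q + 1 = of_int k / of_nat D"
      then have "q = of_int (k - int D) / of_nat D" using D by (simp add: field_simps)
      then show False using False by blast
    qed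
    then show ?thesis using pz_of_fls_off[OF D] False by (simp add: pz_deriv_def)
  qed
qed

lemma funpow_pz_deriv_pz_of_fls:
  "D > 0 \<Longrightarrow> (pz_deriv ^^ m) (pz_of_fls D f) = pz_of_fls D ((fls_ramified_deriv D ^^ m) f)"
  by (induction m) (auto simp: pz_deriv_pz_of_fls)

lemma is_puiseux_coeff_eq_0_below_val:
  assumes "is_puiseux c" and "ereal (real_of_rat q) < pz_val c"
  shows "c q = 0"
proof (rule ccontr)
  assume cq: "c q \<noteq> 0"
  obtain d :: nat and N :: int where d: "d > 0"
    and N: "\<And>q. c q \<noteq> 0 \<Longrightarrow> \<exists>k. k \<ge> N \<and> q = of_int k / of_nat d"
    using assms(1) unfolding is_puiseux_def by blast
  define P where "P m \<longleftrightarrow> c (of_int (N + int m) / of_nat d) \<noteq> 0" for m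
  define m where "m = of_int (N + int (LEAST m. P m)) / (of_nat d :: rat)"
  have P_index: "P (nat (k - N))" if "c q' \<noteq> 0" "k \<ge> N" "q' = of_int k / of_nat d" for q' k
    using that by (simp add: P_def)
  obtain k0 where "k0 \<ge> N" "q = of_int k0 / of_nat d" using N cq by blast
  then have "P (LEAST m. P m)" using P_index cq by (blast intro: LeastI)
  then have cm: "c m \<noteq> 0" by (simp add: P_def m_def)
  have m_le: "m \<le> q'" if "c q' \<noteq> 0" for q'
  proof -
    obtain k where k: "k \<ge> N" "q' = of_int k / of_nat d" using N \<open>c q' \<noteq> 0\<close> by blast
    then have "(LEAST m. P m) \<le> nat (k - N)" using P_index \<open>c q' \<noteq> 0\<close> by (blast intro: Least_le)
    then have "N + int (LEAST m. P m) \<le> k" using k by linarith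
    then show ?thesis using k d by (simp add: m_def divide_right_mono)
  qed
  then have "(LEAST q. c q \<noteq> 0) = m" using cm by (blast intro: Least_equality)
  then have "pz_val c = ereal (real_of_rat m)" using cq by (auto simp: pz_val_def)
  then show False using assms(2) m_le[OF cq] by (simp add: of_rat_less)
qed

lemma is_puiseux_denominator:
  assumes "is_puiseux c"
  shows "\<exists>d::nat. d > 0 \<and> (\<forall>q. c q \<noteq> 0 \<longrightarrow> (\<exists>k::int. q = of_int k / of_nat d))"
proof -
  obtain d :: nat and N :: int where "d > 0"
    and N: "\<And>q. c q \<noteq> 0 \<Longrightarrow> \<exists>k. k \<ge> N \<and> q = of_int k / of_nat d"
    using assms unfolding is_puiseux_def by blast
  then show ?thesis by (metis N)
qed

lemma is_puiseux_common_denominator: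
  assumes "finite I" and "\<And>i. i \<in> I \<Longrightarrow> is_puiseux (S i)"
  obtains D :: nat where "D > 0"
    and "\<And>i q. i \<in> I \<Longrightarrow> S i q \<noteq> 0 \<Longrightarrow> \<exists>k::int. q = of_int k / of_nat D"
proof -
  have "\<forall>i\<in>I. \<exists>d::nat. d > 0 \<and> (\<forall>q. S i q \<noteq> 0 \<longrightarrow> (\<exists>k::int. q = of_int k / of_nat d))"
    using assms(2) is_puiseux_denominator by blast
  from bchoice[OF this] obtain d where d: "\<forall>i\<in>I. d i > 0 \<and>
      (\<forall>q. S i q \<noteq> 0 \<longrightarrow> (\<exists>k::int. q = of_int k / of_nat (d i)))"
    by blast
  define D where "D = (\<Prod>i\<in>I. d i)"
  have D: "D > 0" unfolding D_def using d by (auto intro: prod_pos)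
  have "\<exists>k::int. q = of_int k / of_nat D" if i: "i \<in> I" and q: "S i q \<noteq> 0" for i q
  proof -
    obtain k where k: "q = of_int k / of_nat (d i)" using d i q by blast
    have "d i dvd D" unfolding D_def using i assms(1) by (auto intro: dvd_prodI)
    then obtain e where e: "D = d i * e" by blast
    then have "e > 0" using D by (cases "e = 0") auto
    moreover have "d i > 0" using d i by blast
    ultimately have "q = of_int (k * int e) / of_nat D" using k e by (simp add: field_simps)
    then show ?thesis by blast
  qed
  with D show ?thesis using that by blast
qed

lemma puiseux_eq_pz_of_fls:
  assumes D: "D > 0"
    and supp: "\<And>q. c q \<noteq> 0 \<Longrightarrow> \<exists>k. q = of_int k / of_nat D"
    and nonneg: "\<And>q. q < 0 \<Longrightarrow> c q = 0"
  defines "f \<equiv> Abs_fls (\<lambda>k. c (of_int k / of_nat D))"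
  shows "c = pz_of_fls D f" and "fls_vanishes_below 0 f"
proof -
  have nth: "fls_nth f k = c (of_int k / of_nat D)" for k
    unfolding f_def
    by (rule nth_Abs_fls_lower_bound[where N = 0]) (use D nonneg in \<open>auto simp: divide_less_0_iff\<close>)
  show "fls_vanishes_below 0 f"
    using D nonneg by (auto simp: fls_vanishes_below_def nth divide_less_0_iff)
  show "c = pz_of_fls D f"
  proof
    fix q
    show "c q = pz_of_fls D f q"
    proof (cases "\<exists>k. q = of_int k / of_nat D")
      case True
      then show ?thesis using pz_of_fls_at[OF D] nth by auto
    next
      case False
      then show ?thesis using supp[of q] pz_of_fls_off[OF D, of q f] by auto
    qed
  qed
qed

lemma puiseux_family_eq_pz_of_fls:
  assumes "finite I"
    and puiseux: "\<And>i. i \<in> I \<Longrightarrow> is_puiseux (S i)"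
    and val: "\<And>i. i \<in> I \<Longrightarrow> pz_val (S i) \<ge> 0"
  obtains D f where "D > 0"
    and "\<And>i. i \<in> I \<Longrightarrow> S i = pz_of_fls D (f i)"
    and "\<And>i. i \<in> I \<Longrightarrow> fls_vanishes_below 0 (f i)"
proof -
  obtain D where D: "D > 0"
    and supp: "\<And>i q. i \<in> I \<Longrightarrow> S i q \<noteq> 0 \<Longrightarrow> \<exists>k::int. q = of_int k / of_nat D"
    using is_puiseux_common_denominator[of I S, OF assms(1) puiseux] by blast
  have nonneg: "S i q = 0" if "i \<in> I" "q < 0" for i q
  proof (rule is_puiseux_coeff_eq_0_below_val[OF puiseux[OF \<open>i \<in> I\<close>]])
    have "ereal (real_of_rat q) < 0" using \<open>q < 0\<close> by (simp add: zero_ereal_def)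
    also have "0 \<le> pz_val (S i)" using val[OF \<open>i \<in> I\<close>] .
    finally show "ereal (real_of_rat q) < pz_val (S i)" .
  qed
  define f where "f i = Abs_fls (\<lambda>k. S i (of_int k / of_nat D))" for i
  have "S i = pz_of_fls D (f i)" and "fls_vanishes_below 0 (f i)" if "i \<in> I" for i
    using puiseux_eq_pz_of_fls[of D "S i", OF D supp[OF that] nonneg[OF that]]
    unfolding f_def by simp_all
  then show ?thesis by (rule that[OF D])
qed

definition wronskian_mat :: "nat \<Rightarrow> nat \<Rightarrow> (nat \<Rightarrow> complex fls) \<Rightarrow> complex fls mat" where
  "wronskian_mat D n f = mat n n (\<lambda>(i, j). (fls_ramified_deriv D ^^ i) (f j))"

lemma wronskian_pz_of_fls:
  assumes D: "D > 0" and S: "\<And>i. i < n \<Longrightarrow> S i = pz_of_fls D (f i)"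
  shows "wronskian n S = pz_of_fls D (det (wronskian_mat D n f))"
proof -
  let ?M = "wronskian_mat D n f"
  let ?P = "{p. p permutes {..<n}}"
  have prod_upt: "prod_list (map g [0..<n]) = (\<Prod>i=0..<n. g i)" for g :: "nat \<Rightarrow> complex fls"
    using prod.distinct_set_conv_list[of "[0..<n]" g] by simp
  have leibniz_term: "pz_prod_list (map (\<lambda>i. (pz_deriv ^^ i) (S (p i))) [0..<n])
      = pz_of_fls D (\<Prod>i=0..<n. ?M $$ (i, p i))" if "p \<in> ?P" for p
  proof -
    have "map (\<lambda>i. (pz_deriv ^^ i) (S (p i))) [0..<n]
        = map (pz_of_fls D) (map (\<lambda>i. ?M $$ (i, p i)) [0..<n])"
      using permutes_in_image[of p "{..<n}"] that
      by (auto simp: S funpow_pz_deriv_pz_of_fls[OF D] wronskian_mat_def)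
    then show ?thesis by (simp only: pz_prod_list_pz_of_fls[OF D] prod_upt)
  qed
  have "wronskian n S
      = (\<lambda>q. \<Sum>p\<in>?P. of_int (sign p) * pz_of_fls D (\<Prod>i=0..<n. ?M $$ (i, p i)) q)"
    unfolding wronskian_def using leibniz_term by (intro ext sum.cong) auto
  also have "\<dots> = pz_of_fls D (\<Sum>p\<in>?P. of_int (sign p) * (\<Prod>i=0..<n. ?M $$ (i, p i)))"
    by (simp only: pz_of_fls_sum pz_of_fls_of_int_mult)
  also have "(\<Sum>p\<in>?P. of_int (sign p) * (\<Prod>i=0..<n. ?M $$ (i, p i))) = det ?M"
    by (simp add: det_def'[of _ n] wronskian_mat_def atLeast0LessThan)
  finally show ?thesis .
qed

lemma det_wronskian_mat_vanishes_below:
  assumes "n \<ge> 1" and f: "\<And>j. j < n \<Longrightarrow> fls_vanishes_below 0 (f j)"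
    and F: "fls_vanishes_below a (\<Sum>j<n. f j)"
  shows "fls_vanishes_below (a - int D * int (\<Sum>i<n. i)) (det (wronskian_mat D n f))"
proof -
  let ?M = "wronskian_mat D n f"
  define B where "B = mat n n (\<lambda>(i, j). if j = n - 1 then \<Sum>l<n. ?M $$ (i, l) else ?M $$ (i, j))"
  have "fls_vanishes_below ((\<Sum>i<n. - int i * int D) + (\<Sum>j<n. if j = n - 1 then a else 0)) (det B)"
  proof (rule det_fls_vanishes_below)
    fix i j assume ij: "i < n" "j < n"
    show "fls_vanishes_below (- int i * int D + (if j = n - 1 then a else 0)) (B $$ (i, j))"
    proof (cases "j = n - 1")
      case True
      have "B $$ (i, j) = (fls_ramified_deriv D ^^ i) (\<Sum>l<n. f l)"
        using ij True by (simp add: B_def wronskian_mat_def funpow_fls_ramified_deriv_sum)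
      then show ?thesis using fls_vanishes_below_funpow_ramified_deriv[OF F, of i D] True by simp
    next
      case False
      then show ?thesis
        using ij fls_vanishes_below_funpow_ramified_deriv[OF f[OF ij(2)], of i D]
        by (simp add: B_def wronskian_mat_def)
    qed
  qed (simp add: B_def)
  moreover have "(\<Sum>j<n. if j = n - 1 then a else 0) = a" using assms(1) by simp
  moreover have "(\<Sum>i<n. - int i * int D) = - (int D * int (\<Sum>i<n. i))"
    by (simp add: sum_negf sum_distrib_left of_nat_sum mult.commute)
  moreover have "det B = det ?M"
    unfolding B_def by (rule det_last_col_row_sums) (simp add: wronskian_mat_def)
  ultimately show ?thesis by simp
qed

theorem mainTheorem2:
  fixes n :: nat and S :: "nat \<Rightarrow> puiseux"
  assumes "n \<ge> 1"
    and "\<forall>i<n. is_puiseux (S i)"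
    and "\<forall>i<n. pz_val (S i) \<ge> 0"
  shows "pz_val (\<lambda>q. \<Sum>i<n. S i q)
           \<le> ereal (real n * (real n - 1) / 2) + pz_val (wronskian n S)"
proof -
  obtain D f where D: "D > 0" and S: "\<And>i. i \<in> {..<n} \<Longrightarrow> S i = pz_of_fls D (f i)"
    and f: "\<And>i. i \<in> {..<n} \<Longrightarrow> fls_vanishes_below 0 (f i)"
    by (rule puiseux_family_eq_pz_of_fls[of "{..<n}" S]) (use assms(2,3) in auto)
  have sum: "(\<lambda>q. \<Sum>i<n. S i q) = pz_of_fls D (\<Sum>i<n. f i)"
    unfolding pz_of_fls_sum by (intro ext sum.cong) (simp_all add: S)
  have W: "wronskian n S = pz_of_fls D (det (wronskian_mat D n f))"
    using wronskian_pz_of_fls[OF D S[unfolded lessThan_iff]] .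
  have gauss: "real (\<Sum>i<m. i) = real m * (real m - 1) / 2" for m
    by (induction m) (simp_all add: field_simps)
  have "fls_vanishes_below (a - int D * int (\<Sum>i<n. i)) (det (wronskian_mat D n f))"
    if "fls_vanishes_below a (\<Sum>i<n. f i)" for a
    using det_wronskian_mat_vanishes_below[OF assms(1) f[unfolded lessThan_iff] that] .
  from pz_val_pz_of_fls_le[OF D this] show ?thesis
    unfolding sum W gauss .
qed

end
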